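(* Let $k$ be an algebraically closed field of characteristic $p\ge5$. The singular set of $R^p$ in $\mathbf{A}^3_k$, i.e. the algebraic set defined by the ideal $\langle R^p(e_2),R^p(e_4),R^p(e_6)\rangle\subset k[e_2,e_4,e_6]$, equals $\{e_4^3-e_6^2=0\}$.
   Context: $R = \frac{e_2^2-e_4}{12}\frac{\partial}{\partial e_2} + \frac{e_2e_4-e_6}{3}\frac{\partial}{\partial e_4} + \frac{e_2e_6-e_4^2}{2}\frac{\partial}{\partial e_6}$ is the Ramanujan vector field on $\mathbf{A}^3_k$ with coordinates $(e_2,e_4,e_6)$, and $R^p$ is its $p$-fold composite as a derivation of $k[e_2,e_4,e_6]$. *)

theory Defs
  imports "HOL-Computational_Algebra.Polynomial"
begin

text \<open>The polynomial ring k[e2,e4,e6] is modelled as nested univariate polynomials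
  ((k[e2])[e4])[e6], i.e. the type 'k poly poly poly.\<close>

type_synonym 'k poly3 = "'k poly poly poly"

definition C3 :: "'k::field \<Rightarrow> 'k poly3" where
  "C3 c = [:[:[:c:]:]:]"

definition E2 :: "'k::field poly3" where "E2 = [:[:[:0, 1:]:]:]"
definition E4 :: "'k::field poly3" where "E4 = [:[:0, 1:]:]"
definition E6 :: "'k::field poly3" where "E6 = [:0, 1:]"

definition D2 :: "'k::field poly3 \<Rightarrow> 'k poly3" where
  "D2 f = map_poly (map_poly pderiv) f"
definition D4 :: "'k::field poly3 \<Rightarrow> 'k poly3" where
  "D4 f = map_poly pderiv f"
definition D6 :: "'k::field poly3 \<Rightarrow> 'k poly3" where
  "D6 f = pderiv f"

definition ramanujan :: "'k::field poly3 \<Rightarrow> 'k poly3" where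
  "ramanujan f =
     C3 (inverse 12) * (E2^2 - E4) * D2 f
   + C3 (inverse 3) * (E2 * E4 - E6) * D4 f
   + C3 (inverse 2) * (E2 * E6 - E4^2) * D6 f"

definition eval3 :: "'k::field poly3 \<Rightarrow> 'k \<Rightarrow> 'k \<Rightarrow> 'k \<Rightarrow> 'k" where
  "eval3 f a b c = poly (map_poly (\<lambda>q. poly q b) (map_poly (map_poly (\<lambda>q. poly q a)) f)) c"

definition alg_closed_field :: "'k::field itself \<Rightarrow> bool" where
  "alg_closed_field _ \<longleftrightarrow> (\<forall>q::'k poly. degree q > 0 \<longrightarrow> (\<exists>x. poly q x = 0))"

end

(*
  In characteristic p the p-th iterate of a derivation is again a derivation, and R^p commutes
  with d/de2 and with the weight operator, since the commutators of R with these contribute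
  multiples of p. Hence a = R^p e2, b = R^p e4, c = R^p e6 do not involve e2 and are weighted
  homogeneous of weights 2p + 2, 2p + 4, 2p + 6. Writing R through the (rescaled) Serre
  derivation theta = 4 e6 d/de4 + 6 e4^2 d/de6 gives theta a = b, theta b = 4c - 4 e4 a and
  theta c = 12 e4 b - 6 e6 a, so the module spanned by a, b, theta b is stable under theta and the
  Euler operator in e4, e6, hence under Delta d/de4 and Delta d/de6, where Delta = e4^3 - e6^2.
  At a common zero of a, b, c off Delta = 0 all partial derivatives of a thus vanish; as a has
  degree < p in e4 and in e6, Taylor expansion gives a = 0, contradicting R^p Delta /= 0.
  Conversely, e2 = u + t, e4 = t^2, e6 = t^3 transforms R into V = (u^2 d/du + 2ut d/dt)/12, and
  V multiplies u^i t^j by (i + 2j)/12 while raising i by one, so V^p kills every monomial; every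
  point of e4^3 = e6^2 has this form.
*)
theory Submission
  imports Defs "HOL-Computational_Algebra.Primes"
begin

section \<open>Derivations and their iterates\<close>

definition derivation :: "('a::comm_ring_1 \<Rightarrow> 'a) \<Rightarrow> bool" where
  "derivation d \<longleftrightarrow> (\<forall>x y. d (x + y) = d x + d y) \<and> (\<forall>x y. d (x * y) = d x * y + x * d y)"

lemma derivation_add: "derivation d \<Longrightarrow> d (x + y) = d x + d y"
  unfolding derivation_def by blast

lemma derivation_mult: "derivation d \<Longrightarrow> d (x * y) = d x * y + x * d y"
  unfolding derivation_def by blast

lemma derivation_0: "derivation d \<Longrightarrow> d 0 = 0"
  using derivation_add[of d 0 0] by simp

lemma derivation_uminus: "derivation d \<Longrightarrow> d (- x) = - d x"
  using derivation_add[of d x "- x"] derivation_0[of d]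
  by (simp add: eq_neg_iff_add_eq_0 add.commute)

lemma derivation_diff: "derivation d \<Longrightarrow> d (x - y) = d x - d y"
  using derivation_add[of d x "- y"] derivation_uminus[of d y] by simp

lemma derivation_1: "derivation d \<Longrightarrow> d 1 = 0"
  using derivation_mult[of d 1 1] by simp

lemma derivation_of_nat: "derivation d \<Longrightarrow> d (of_nat n) = 0"
  by (induction n) (simp_all add: derivation_0 derivation_add derivation_1)

lemma derivation_numeral: "derivation d \<Longrightarrow> d (numeral n) = 0"
  using derivation_of_nat[of d "numeral n"] by simp

lemma derivation_sum: "derivation d \<Longrightarrow> d (sum f A) = (\<Sum>a\<in>A. d (f a))"
  by (induction A rule: infinite_finite_induct) (simp_all add: derivation_0 derivation_add)

lemma derivation_power: "derivation d \<Longrightarrow> d (x ^ Suc n) = of_nat (Suc n) * x ^ n * d x"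
  by (induction n) (simp_all add: derivation_mult algebra_simps)

lemma derivation_const_mult: "derivation d \<Longrightarrow> d c = 0 \<Longrightarrow> d (c * x) = c * d x"
  by (simp add: derivation_mult)

lemmas derivation_simps = derivation_add derivation_mult derivation_diff derivation_uminus
  derivation_0 derivation_1 derivation_of_nat derivation_numeral

lemma derivation_pderiv: "derivation (pderiv :: 'a::idom poly \<Rightarrow> 'a poly)"
  unfolding derivation_def by (simp add: pderiv_add pderiv_mult algebra_simps)

lemma derivation_map_poly:
  assumes "derivation d"
  shows "derivation (map_poly d)"
proof -
  have d0: "d 0 = 0" using assms by (rule derivation_0)
  have "map_poly d (x * y) = map_poly d x * y + x * map_poly d y" for x y
  proof (rule poly_eqI)
    fix n
    have "coeff (map_poly d (x * y)) n = d (\<Sum>i\<le>n. coeff x i * coeff y (n - i))"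
      by (simp add: coeff_map_poly d0 coeff_mult)
    also have "\<dots> = (\<Sum>i\<le>n. d (coeff x i) * coeff y (n - i) + coeff x i * d (coeff y (n - i)))"
      by (simp add: derivation_sum[OF assms] derivation_mult[OF assms])
    also have "\<dots> = coeff (map_poly d x * y + x * map_poly d y) n"
      by (simp add: coeff_mult coeff_map_poly d0 sum.distrib)
    finally show "coeff (map_poly d (x * y)) n = coeff (map_poly d x * y + x * map_poly d y) n" .
  qed
  moreover have "map_poly d (x + y) = map_poly d x + map_poly d y" for x y
    by (rule poly_eqI) (simp add: coeff_map_poly d0 derivation_add[OF assms])
  ultimately show ?thesis
    unfolding derivation_def by blast
qed

lemma derivation_plus: "derivation d1 \<Longrightarrow> derivation d2 \<Longrightarrow> derivation (\<lambda>x. d1 x + d2 x)"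
  unfolding derivation_def by (simp add: algebra_simps)

lemma derivation_scale: "derivation d \<Longrightarrow> derivation (\<lambda>x. a * d x)"
  unfolding derivation_def by (simp add: algebra_simps)

lemma funpow_derivation_add: "derivation d \<Longrightarrow> (d ^^ n) (x + y) = (d ^^ n) x + (d ^^ n) y"
  by (induction n) (simp_all add: derivation_add)

lemma funpow_derivation_const_mult:
  "derivation d \<Longrightarrow> d c = 0 \<Longrightarrow> (d ^^ n) (c * x) = c * (d ^^ n) x"
  by (induction n) (simp_all add: derivation_const_mult)

lemma funpow_commute_map:
  assumes "\<And>x. h (f x) = g (h x)"
  shows "h ((f ^^ n) x) = (g ^^ n) (h x)"
  by (induction n) (simp_all add: assms)

lemma funpow_derivation_Leibniz:
  assumes "derivation d"
  shows "(d ^^ n) (x * y) = (\<Sum>k\<le>n. of_nat (n choose k) * (d ^^ k) x * (d ^^ (n - k)) y)"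
proof (induction n)
  case 0
  then show ?case by simp
next
  case (Suc n)
  let ?f = "\<lambda>k. (d ^^ k) x" and ?g = "\<lambda>k. (d ^^ k) y"
  have "(d ^^ Suc n) (x * y) = (\<Sum>k\<le>n. of_nat (n choose k) * ?f (Suc k) * ?g (n - k))
      + (\<Sum>k\<le>n. of_nat (n choose k) * ?f k * ?g (Suc (n - k)))"
    using Suc by (simp add: derivation_sum[OF assms] derivation_mult[OF assms]
        derivation_of_nat[OF assms] sum.distrib algebra_simps)
  also have "(\<Sum>k\<le>n. of_nat (n choose k) * ?f (Suc k) * ?g (n - k))
      = (\<Sum>k\<le>Suc n. (if k = 0 then 0 else of_nat (n choose (k - 1))) * ?f k * ?g (Suc n - k))"
    by (subst sum.atMost_Suc_shift) (simp del: sum.atMost_Suc)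
  also have "(\<Sum>k\<le>n. of_nat (n choose k) * ?f k * ?g (Suc (n - k)))
      = (\<Sum>k\<le>Suc n. of_nat (n choose k) * ?f k * ?g (Suc n - k))"
    by (simp add: Suc_diff_le binomial_eq_0)
  also have "(\<Sum>k\<le>Suc n. (if k = 0 then 0 else of_nat (n choose (k - 1))) * ?f k * ?g (Suc n - k))
      + (\<Sum>k\<le>Suc n. of_nat (n choose k) * ?f k * ?g (Suc n - k))
      = (\<Sum>k\<le>Suc n. of_nat (Suc n choose k) * ?f k * ?g (Suc n - k))"
    unfolding sum.distrib[symmetric]
  proof (rule sum.cong)
    show "(if k = 0 then 0 else of_nat (n choose (k - 1))) * ?f k * ?g (Suc n - k)
        + of_nat (n choose k) * ?f k * ?g (Suc n - k)
        = of_nat (Suc n choose k) * ?f k * ?g (Suc n - k)" for k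
      by (cases k) (simp_all add: algebra_simps)
  qed simp
  finally show ?case .
qed

text \<open>In characteristic \<open>p\<close> the mixed terms of the Leibniz rule carry binomial
  coefficients divisible by \<open>p\<close>.\<close>
lemma derivation_funpow_prime:
  assumes d: "derivation d" and "prime p" and p0: "of_nat p = (0::'a::comm_ring_1)"
  shows "derivation (d ^^ p :: 'a \<Rightarrow> 'a)"
proof -
  have "(d ^^ p) (x * y) = (d ^^ p) x * y + x * (d ^^ p) y" for x y
  proof -
    have "(d ^^ p) (x * y) = (\<Sum>k\<in>{0,p}. of_nat (p choose k) * (d ^^ k) x * (d ^^ (p - k)) y)"
      unfolding funpow_derivation_Leibniz[OF d]
    proof (intro sum.mono_neutral_right ballI)
      fix k assume "k \<in> {..p} - {0, p}"
      then have "p dvd (p choose k)"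
        using \<open>prime p\<close> by (intro dvd_choose_prime) auto
      then show "of_nat (p choose k) * (d ^^ k) x * (d ^^ (p - k)) y = 0"
        using p0 by (auto elim: dvdE)
    qed auto
    then show ?thesis
      using prime_gt_0_nat[OF \<open>prime p\<close>] by (simp add: add_ac)
  qed
  then show ?thesis
    unfolding derivation_def using funpow_derivation_add[OF d] by blast
qed

lemma map_poly_pderiv_commute:
  assumes "\<And>n x. h (of_nat n * x) = of_nat n * h x"
  shows "map_poly h (pderiv q) = pderiv (map_poly h q)"
proof -
  have "h 0 = 0" using assms[of 0 0] by simp
  then show ?thesis
    by (intro poly_eqI) (simp add: coeff_map_poly coeff_pderiv assms del: of_nat_Suc)
qed

lemma map_poly_pderiv_commute_derivation:
  "derivation d \<Longrightarrow> map_poly d (pderiv q) = pderiv (map_poly d q)"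
  by (rule map_poly_pderiv_commute) (simp add: derivation_const_mult derivation_of_nat)

definition ring_homomorphism :: "('a::comm_ring_1 \<Rightarrow> 'b::comm_ring_1) \<Rightarrow> bool" where
  "ring_homomorphism h \<longleftrightarrow>
     (\<forall>x y. h (x + y) = h x + h y) \<and> (\<forall>x y. h (x * y) = h x * h y) \<and> h 1 = 1"

lemma ring_homomorphism_add: "ring_homomorphism h \<Longrightarrow> h (x + y) = h x + h y"
  unfolding ring_homomorphism_def by blast

lemma ring_homomorphism_mult: "ring_homomorphism h \<Longrightarrow> h (x * y) = h x * h y"
  unfolding ring_homomorphism_def by blast

lemma ring_homomorphism_1: "ring_homomorphism h \<Longrightarrow> h 1 = 1"
  unfolding ring_homomorphism_def by blast

lemma ring_homomorphism_0: "ring_homomorphism h \<Longrightarrow> h 0 = 0"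
  using ring_homomorphism_add[of h 0 0] by simp

lemma ring_homomorphism_uminus: "ring_homomorphism h \<Longrightarrow> h (- x) = - h x"
  using ring_homomorphism_add[of h x "- x"] ring_homomorphism_0[of h]
  by (simp add: eq_neg_iff_add_eq_0 add.commute)

lemma ring_homomorphism_diff: "ring_homomorphism h \<Longrightarrow> h (x - y) = h x - h y"
  using ring_homomorphism_add[of h x "- y"] ring_homomorphism_uminus[of h y] by simp

lemma ring_homomorphism_of_nat: "ring_homomorphism h \<Longrightarrow> h (of_nat n) = of_nat n"
  by (induction n) (simp_all add: ring_homomorphism_0 ring_homomorphism_add ring_homomorphism_1)

lemma ring_homomorphism_numeral: "ring_homomorphism h \<Longrightarrow> h (numeral n) = numeral n"
  using ring_homomorphism_of_nat[of h "numeral n"] by simp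

lemma ring_homomorphism_power: "ring_homomorphism h \<Longrightarrow> h (x ^ n) = h x ^ n"
  by (induction n) (simp_all add: ring_homomorphism_1 ring_homomorphism_mult)

lemma ring_homomorphism_sum: "ring_homomorphism h \<Longrightarrow> h (sum f A) = (\<Sum>a\<in>A. h (f a))"
  by (induction A rule: infinite_finite_induct)
    (simp_all add: ring_homomorphism_0 ring_homomorphism_add)

lemmas ring_homomorphism_simps = ring_homomorphism_add ring_homomorphism_mult ring_homomorphism_1
  ring_homomorphism_0 ring_homomorphism_uminus ring_homomorphism_diff ring_homomorphism_of_nat
  ring_homomorphism_numeral ring_homomorphism_power

lemma ring_homomorphism_poly: "ring_homomorphism (\<lambda>q. poly q x)"
  unfolding ring_homomorphism_def by simp

lemma ring_homomorphism_comp: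
  "ring_homomorphism f \<Longrightarrow> ring_homomorphism g \<Longrightarrow> ring_homomorphism (\<lambda>x. f (g x))"
  unfolding ring_homomorphism_def by simp

lemma ring_homomorphism_map_poly:
  assumes h: "ring_homomorphism h"
  shows "ring_homomorphism (map_poly h)"
  unfolding ring_homomorphism_def
proof (intro conjI allI)
  have h0: "h 0 = 0" by (rule ring_homomorphism_0[OF h])
  show "map_poly h (x + y) = map_poly h x + map_poly h y" for x y
    by (rule poly_eqI) (simp add: coeff_map_poly h0 ring_homomorphism_add[OF h])
  show "map_poly h (x * y) = map_poly h x * map_poly h y" for x y
    by (rule poly_eqI) (simp add: coeff_map_poly h0 coeff_mult ring_homomorphism_sum[OF h]
        ring_homomorphism_mult[OF h])
  show "map_poly h 1 = 1"
    using ring_homomorphism_1[OF h] by simp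
qed

lemma ring_homomorphism_poly_commute:
  "ring_homomorphism h \<Longrightarrow> h (poly q x) = poly (map_poly h q) (h x)"
  by (induction q) (simp_all add: map_poly_pCons ring_homomorphism_simps)

lemma map_poly_pderiv_commute_hom:
  "ring_homomorphism h \<Longrightarrow> map_poly h (pderiv q) = pderiv (map_poly h q)"
  by (rule map_poly_pderiv_commute) (simp add: ring_homomorphism_simps)

text \<open>By the Leibniz rule, \<open>h (d\<^sup>j (u * g))\<close> is \<open>h u * h (d\<^sup>j g)\<close> plus terms that vanish
  by induction on \<open>j\<close>.\<close>
lemma hom_funpow_derivation_cancel_factor:
  fixes d :: "'a::comm_ring_1 \<Rightarrow> 'a" and h :: "'a \<Rightarrow> 'b::field"
  assumes d: "derivation d" and h: "ring_homomorphism h" and "h u \<noteq> 0"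
    and vanish: "\<And>j. h ((d ^^ j) (u * g)) = 0"
  shows "h ((d ^^ j) g) = 0"
proof (induction j rule: less_induct)
  case (less j)
  have "h ((d ^^ j) (u * g)) = (\<Sum>k\<le>j. h (of_nat (j choose k) * (d ^^ k) u * (d ^^ (j - k)) g))"
    by (simp add: funpow_derivation_Leibniz[OF d] ring_homomorphism_sum[OF h])
  also have "\<dots> = h u * h ((d ^^ j) g)"
  proof (cases j)
    case 0
    then show ?thesis by (simp add: ring_homomorphism_simps[OF h])
  next
    case (Suc m)
    have "h ((d ^^ (j - Suc k)) g) = 0" for k
      using Suc by (intro less) auto
    then show ?thesis
      unfolding Suc sum.atMost_Suc_shift by (simp add: ring_homomorphism_simps[OF h])
  qed
  finally show ?case
    using vanish \<open>h u \<noteq> 0\<close> by simp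
qed

lemma ring_homomorphism_C3: "ring_homomorphism (C3 :: 'k::field \<Rightarrow> 'k poly3)"
  unfolding ring_homomorphism_def C3_def by (simp add: pCons_one)

lemmas C3_simps = ring_homomorphism_simps[OF ring_homomorphism_C3]

lemma derivation_D2: "derivation (D2 :: 'k::field poly3 \<Rightarrow> _)"
  unfolding D2_def by (intro derivation_map_poly derivation_pderiv)

lemma derivation_D4: "derivation (D4 :: 'k::field poly3 \<Rightarrow> _)"
  unfolding D4_def by (intro derivation_map_poly derivation_pderiv)

lemma derivation_D6: "derivation (D6 :: 'k::field poly3 \<Rightarrow> _)"
  unfolding D6_def by (rule derivation_pderiv)

lemmas D2_simps = derivation_simps[OF derivation_D2]
lemmas D4_simps = derivation_simps[OF derivation_D4]
lemmas D6_simps = derivation_simps[OF derivation_D6]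

lemma D4_D6_commute: "D4 (D6 f) = D6 (D4 (f :: 'k::field poly3))"
  unfolding D4_def D6_def by (rule map_poly_pderiv_commute_derivation[OF derivation_pderiv])

lemma D2_D6_commute: "D2 (D6 f) = D6 (D2 (f :: 'k::field poly3))"
  unfolding D2_def D6_def
  by (rule map_poly_pderiv_commute_derivation[OF derivation_map_poly[OF derivation_pderiv]])

lemma D2_D4_commute: "D2 (D4 f) = D4 (D2 (f :: 'k::field poly3))"
  unfolding D2_def D4_def
  by (simp add: map_poly_map_poly o_def map_poly_pderiv_commute_derivation[OF derivation_pderiv])

lemma partials_generators:
  "D2 (C3 c) = 0" "D4 (C3 c) = 0" "D6 (C3 c) = 0"
  "D2 E2 = 1" "D4 E2 = 0" "D6 E2 = 0"
  "D2 E4 = 0" "D4 E4 = 1" "D6 E4 = 0"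
  "D2 E6 = 0" "D4 E6 = 0" "D6 E6 = 1"
  by (simp_all add: C3_def D2_def D4_def D6_def E2_def E4_def E6_def map_poly_pCons pderiv_pCons
      pCons_one map_poly_1)

lemma derivation_ramanujan: "derivation ramanujan"
  unfolding ramanujan_def[abs_def]
  by (intro derivation_plus derivation_scale derivation_D2 derivation_D4 derivation_D6)

lemmas ramanujan_simps = derivation_simps[OF derivation_ramanujan]

lemma ring_homomorphism_eval3: "ring_homomorphism (\<lambda>f. eval3 f x y z)"
  unfolding eval3_def
  by (rule ring_homomorphism_comp[OF ring_homomorphism_poly ring_homomorphism_comp[OF
      ring_homomorphism_map_poly[OF ring_homomorphism_poly]
      ring_homomorphism_map_poly[OF ring_homomorphism_map_poly[OF ring_homomorphism_poly]]]])

lemmas eval3_simps = ring_homomorphism_simps[OF ring_homomorphism_eval3]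

lemma eval3_generators:
  "eval3 E2 x y z = x" "eval3 E4 x y z = y" "eval3 E6 x y z = z" "eval3 (C3 c) x y z = c"
  by (simp_all add: eval3_def E2_def E4_def E6_def C3_def map_poly_pCons)

definition subst_e2 :: "'k::field \<Rightarrow> 'k poly3 \<Rightarrow> 'k poly poly" where
  "subst_e2 x f = map_poly (map_poly (\<lambda>q. poly q x)) f"

definition subst_e4 :: "'k::field \<Rightarrow> 'k poly poly \<Rightarrow> 'k poly" where
  "subst_e4 y g = map_poly (\<lambda>q. poly q y) g"

lemma eval3_eq_subst: "eval3 f x y z = poly (subst_e4 y (subst_e2 x f)) z"
  by (simp add: eval3_def subst_e2_def subst_e4_def)

lemma eval3_higher_partials:
  "eval3 ((D6 ^^ j) ((D4 ^^ i) f)) x y z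
     = poly ((pderiv ^^ j) (subst_e4 y ((map_poly pderiv ^^ i) (subst_e2 x f)))) z"
proof -
  have hom: "ring_homomorphism (map_poly (\<lambda>q. poly q x))"
    by (intro ring_homomorphism_map_poly ring_homomorphism_poly)
  have "subst_e2 x (D6 g) = pderiv (subst_e2 x g)" for g
    unfolding subst_e2_def D6_def by (rule map_poly_pderiv_commute_hom[OF hom])
  moreover have "subst_e2 x (D4 g) = map_poly pderiv (subst_e2 x g)" for g
    unfolding subst_e2_def D4_def
    by (simp add: map_poly_map_poly o_def map_poly_pderiv_commute_hom[OF ring_homomorphism_poly])
  moreover have "subst_e4 y (pderiv g) = pderiv (subst_e4 y g)" for g
    unfolding subst_e4_def by (rule map_poly_pderiv_commute_hom[OF ring_homomorphism_poly])
  ultimately show ?thesis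
    by (simp add: eval3_eq_subst funpow_commute_map)
qed

section \<open>Weighted homogeneity\<close>

text \<open>\<open>Q w x\<close> reads ``\<open>x\<close> is homogeneous of weight \<open>w\<close>''.\<close>
definition graded :: "(int \<Rightarrow> 'a::comm_ring_1 \<Rightarrow> bool) \<Rightarrow> bool" where
  "graded Q \<longleftrightarrow> (\<forall>w. Q w 0) \<and> Q 0 1 \<and> (\<forall>w x y. Q w x \<longrightarrow> Q w y \<longrightarrow> Q w (x + y))
     \<and> (\<forall>w x. Q w x \<longrightarrow> Q w (- x)) \<and> (\<forall>u v x y. Q u x \<longrightarrow> Q v y \<longrightarrow> Q (u + v) (x * y))"

text \<open>The grading of \<open>'a[X]\<close> extending \<open>Q\<close> in which \<open>X\<close> has weight \<open>d\<close>.\<close>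
definition poly_graded :: "(int \<Rightarrow> 'a::comm_ring_1 \<Rightarrow> bool) \<Rightarrow> int \<Rightarrow> int \<Rightarrow> 'a poly \<Rightarrow> bool" where
  "poly_graded Q d w f \<longleftrightarrow> (\<forall>k. Q (w - d * int k) (coeff f k))"

definition trivial_grading :: "int \<Rightarrow> 'a::field \<Rightarrow> bool" where
  "trivial_grading w x \<longleftrightarrow> (x \<noteq> 0 \<longrightarrow> w = 0)"

lemma gradedD:
  assumes "graded Q"
  shows "Q w 0" "Q 0 1" "Q w x \<Longrightarrow> Q w y \<Longrightarrow> Q w (x + y)" "Q w x \<Longrightarrow> Q w (- x)"
    "Q u x \<Longrightarrow> Q v y \<Longrightarrow> Q (u + v) (x * y)"
  using assms unfolding graded_def by blast+

lemma graded_diff: "graded Q \<Longrightarrow> Q w x \<Longrightarrow> Q w y \<Longrightarrow> Q w (x - y)"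
  using gradedD(3)[of Q w x "- y"] gradedD(4)[of Q w y] by simp

lemma graded_mult: "graded Q \<Longrightarrow> Q u x \<Longrightarrow> Q v y \<Longrightarrow> w = u + v \<Longrightarrow> Q w (x * y)"
  using gradedD(5) by blast

lemma graded_sum: "graded Q \<Longrightarrow> (\<And>i. i \<in> A \<Longrightarrow> Q w (f i)) \<Longrightarrow> Q w (sum f A)"
  by (induction A rule: infinite_finite_induct) (auto intro: gradedD)

lemma graded_of_nat: "graded Q \<Longrightarrow> Q 0 (of_nat n)"
  by (induction n) (auto intro: gradedD)

lemma graded_trivial_grading: "graded trivial_grading"
  unfolding graded_def trivial_grading_def by auto

lemma graded_poly_graded:
  assumes Q: "graded Q"
  shows "graded (poly_graded Q d)"
  unfolding graded_def
proof (intro conjI allI impI)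
  show "poly_graded Q d (u + v) (x * y)" if "poly_graded Q d u x" "poly_graded Q d v y" for u v x y
    unfolding poly_graded_def coeff_mult
  proof (intro allI graded_sum[OF Q])
    fix k i :: nat assume "i \<in> {..k}"
    then have "u + v - d * int k = (u - d * int i) + (v - d * int (k - i))"
      by (simp add: of_nat_diff algebra_simps)
    then show "Q (u + v - d * int k) (coeff x i * coeff y (k - i))"
      using that by (intro graded_mult[OF Q]) (auto simp: poly_graded_def)
  qed
qed (use gradedD[OF Q] in \<open>auto simp: poly_graded_def coeff_1\<close>)

lemma poly_graded_X: "graded Q \<Longrightarrow> poly_graded Q d d [:0, 1:]"
  unfolding poly_graded_def using gradedD(1,2) by (auto simp: coeff_pCons split: nat.splits)

lemma poly_graded_const: "graded Q \<Longrightarrow> Q w c \<Longrightarrow> poly_graded Q d w [:c:]"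
  unfolding poly_graded_def using gradedD(1) by (auto simp: coeff_pCons split: nat.splits)

lemma poly_graded_pderiv:
  assumes Q: "graded Q" and "poly_graded Q d w f"
  shows "poly_graded Q d (w - d) (pderiv f)"
  unfolding poly_graded_def coeff_pderiv
proof
  fix k
  have "Q (w - d * int (Suc k)) (coeff f (Suc k))"
    using assms(2) by (simp only: poly_graded_def)
  moreover have "w - d - d * int k = 0 + (w - d * int (Suc k))"
    by (simp add: algebra_simps)
  ultimately show "Q (w - d - d * int k) (of_nat (Suc k) * coeff f (Suc k))"
    using gradedD(5)[OF Q graded_of_nat[OF Q]] by (simp only:)
qed

lemma poly_graded_map_poly:
  assumes "\<And>w x. Q w x \<Longrightarrow> Q (w + e) (h x)" "h 0 = 0" "poly_graded Q d w f"
  shows "poly_graded Q d (w + e) (map_poly h f)"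
  using assms unfolding poly_graded_def by (simp add: coeff_map_poly algebra_simps)
    (metis add.commute add_diff_eq)

text \<open>Weighted homogeneity in \<open>k[e\<^sub>2]\<close>, \<open>k[e\<^sub>2, e\<^sub>4]\<close> and \<open>k[e\<^sub>2, e\<^sub>4, e\<^sub>6]\<close>,
  where \<open>e\<^sub>k\<close> has weight \<open>k\<close>.\<close>
abbreviation homogeneous1 :: "int \<Rightarrow> 'k::field poly \<Rightarrow> bool"
  where "homogeneous1 \<equiv> poly_graded trivial_grading 2"
abbreviation homogeneous2 :: "int \<Rightarrow> 'k::field poly poly \<Rightarrow> bool"
  where "homogeneous2 \<equiv> poly_graded homogeneous1 4"
abbreviation homogeneous :: "int \<Rightarrow> 'k::field poly3 \<Rightarrow> bool"
  where "homogeneous \<equiv> poly_graded homogeneous2 6"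

lemma graded_homogeneous1: "graded (homogeneous1 :: int \<Rightarrow> 'k::field poly \<Rightarrow> bool)"
  by (intro graded_poly_graded graded_trivial_grading)

lemma graded_homogeneous2: "graded (homogeneous2 :: int \<Rightarrow> 'k::field poly poly \<Rightarrow> bool)"
  by (intro graded_poly_graded graded_homogeneous1)

lemma graded_homogeneous: "graded (homogeneous :: int \<Rightarrow> 'k::field poly3 \<Rightarrow> bool)"
  by (intro graded_poly_graded graded_homogeneous2)

lemma homogeneous_generators:
  "homogeneous 2 (E2 :: 'k::field poly3)" "homogeneous 4 (E4 :: 'k::field poly3)"
  "homogeneous 6 (E6 :: 'k::field poly3)" "homogeneous 0 (C3 c :: 'k::field poly3)"
  unfolding E2_def E4_def E6_def C3_def
  by (intro poly_graded_const poly_graded_X graded_homogeneous2 graded_homogeneous1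
      graded_trivial_grading; simp add: trivial_grading_def)+

lemma homogeneous_D2:
  assumes "homogeneous w (f :: 'k::field poly3)"
  shows "homogeneous (w - 2) (D2 f)"
proof -
  have D1: "homogeneous1 (v + - 2) (pderiv x)" if "homogeneous1 v (x :: 'k poly)" for v x
    using poly_graded_pderiv[OF graded_trivial_grading that] by simp
  have D12: "homogeneous2 (v + - 2) (map_poly pderiv x)" if "homogeneous2 v (x :: 'k poly poly)"
    for v x using poly_graded_map_poly[where Q = homogeneous1 and e = "- 2", OF D1 _ that] by simp
  show ?thesis
    unfolding D2_def
    using poly_graded_map_poly[where Q = homogeneous2 and e = "- 2", OF D12 _ assms] by simp
qed

lemma homogeneous_D4:
  assumes "homogeneous w (f :: 'k::field poly3)"
  shows "homogeneous (w - 4) (D4 f)"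
proof -
  have D2: "homogeneous2 (v + - 4) (pderiv x)" if "homogeneous2 v (x :: 'k poly poly)" for v x
    using poly_graded_pderiv[OF graded_homogeneous1 that] by simp
  show ?thesis
    unfolding D4_def
    using poly_graded_map_poly[where Q = homogeneous2 and e = "- 4", OF D2 _ assms] by simp
qed

lemma homogeneous_D6: "homogeneous w f \<Longrightarrow> homogeneous (w - 6) (D6 (f :: 'k::field poly3))"
  unfolding D6_def by (rule poly_graded_pderiv[OF graded_homogeneous2])

lemma homogeneous_ramanujan:
  assumes "homogeneous w (f :: 'k::field poly3)"
  shows "homogeneous (w + 2) (ramanujan f)"
proof -
  note mult = graded_mult[OF graded_homogeneous] and diff = graded_diff[OF graded_homogeneous]
    and E = homogeneous_generators
  have "homogeneous 4 (E2^2 - E4 :: 'k poly3)"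
    unfolding power2_eq_square by (intro diff mult[OF E(1) E(1)] E(2)) simp
  then have 2: "homogeneous (w + 2) (C3 (inverse 12) * (E2^2 - E4) * D2 f)"
    by (intro mult[OF mult[OF E(4)] homogeneous_D2[OF assms]]) simp_all
  have "homogeneous 6 (E2 * E4 - E6 :: 'k poly3)"
    by (intro diff mult[OF E(1) E(2)] E(3)) simp
  then have 4: "homogeneous (w + 2) (C3 (inverse 3) * (E2 * E4 - E6) * D4 f)"
    by (intro mult[OF mult[OF E(4)] homogeneous_D4[OF assms]]) simp_all
  have "homogeneous 8 (E2 * E6 - E4^2 :: 'k poly3)"
    unfolding power2_eq_square by (intro diff mult[OF E(1) E(3)] mult[OF E(2) E(2)]) simp_all
  then have 6: "homogeneous (w + 2) (C3 (inverse 2) * (E2 * E6 - E4^2) * D6 f)"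
    by (intro mult[OF mult[OF E(4)] homogeneous_D6[OF assms]]) simp_all
  show ?thesis
    unfolding ramanujan_def by (intro gradedD(3)[OF graded_homogeneous] 2 4 6)
qed

lemma homogeneous_funpow_ramanujan:
  assumes "homogeneous w (f :: 'k::field poly3)"
  shows "homogeneous (w + 2 * int n) ((ramanujan ^^ n) f)"
proof (induction n)
  case (Suc n)
  then have "homogeneous (w + 2 * int n + 2) (ramanujan ((ramanujan ^^ n) f))"
    by (rule homogeneous_ramanujan)
  then show ?case
    by (simp add: algebra_simps)
qed (simp add: assms)

lemma homogeneous_coeff:
  assumes "homogeneous w (f :: 'k::field poly3)" "coeff (coeff (coeff f k) j) i \<noteq> 0"
  shows "w = 6 * int k + 4 * int j + 2 * int i"
  using assms unfolding poly_graded_def trivial_grading_def by force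

lemma coeff_D2:
  "coeff (coeff (coeff (D2 f) k) j) i
     = of_nat (Suc i) * coeff (coeff (coeff (f :: 'k::field poly3) k) j) (Suc i)"
  by (simp add: D2_def coeff_map_poly coeff_pderiv del: of_nat_Suc)

lemma homogeneous_degree_le:
  assumes "homogeneous w (f :: 'k::field poly3)"
  shows "f \<noteq> 0 \<Longrightarrow> 6 * int (degree f) \<le> w"
    and "coeff f k \<noteq> 0 \<Longrightarrow> 4 * int (degree (coeff f k)) \<le> w"
proof -
  have bound: "6 * int k + 4 * int j \<le> w" if "coeff (coeff f k) j \<noteq> 0" for k j
  proof -
    let ?c = "coeff (coeff f k) j"
    have "coeff ?c (degree ?c) \<noteq> 0" using that by simp
    then show ?thesis using homogeneous_coeff[OF assms] by fastforce
  qed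
  show "6 * int (degree f) \<le> w" if "f \<noteq> 0"
    using bound[of "degree f" "degree (coeff f (degree f))"] that by simp
  show "4 * int (degree (coeff f k)) \<le> w" if "coeff f k \<noteq> 0"
    using bound[of k "degree (coeff f k)"] that by simp
qed

section \<open>Weight operators and the discriminant\<close>

definition euler :: "'k::field poly3 \<Rightarrow> 'k poly3" where
  "euler f = 2 * E2 * D2 f + 4 * E4 * D4 f + 6 * E6 * D6 f"

lemma derivation_euler: "derivation euler"
  unfolding euler_def[abs_def]
  by (intro derivation_plus derivation_scale derivation_D2 derivation_D4 derivation_D6)

lemma euler_generators:
  "euler E2 = (2 :: 'k::field poly3) * E2" "euler E4 = (4 :: 'k::field poly3) * E4"
  "euler E6 = (6 :: 'k::field poly3) * E6"
  by (simp_all add: euler_def partials_generators)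

text \<open>Minus twelve times the Serre derivative: on the kernel of \<open>D2\<close>,
  \<open>12 R f = e\<^sub>2 (euler f) - serre f\<close>.\<close>
definition serre :: "'k::field poly3 \<Rightarrow> 'k poly3" where
  "serre f = 4 * E6 * D4 f + 6 * E4^2 * D6 f"

definition euler46 :: "'k::field poly3 \<Rightarrow> 'k poly3" where
  "euler46 f = 4 * E4 * D4 f + 6 * E6 * D6 f"

definition Delta :: "'k::field poly3" where
  "Delta = E4^3 - E6^2"

lemma derivation_serre: "derivation serre"
  unfolding serre_def[abs_def]
  by (intro derivation_plus derivation_scale derivation_D4 derivation_D6)

lemma derivation_euler46: "derivation euler46"
  unfolding euler46_def[abs_def]
  by (intro derivation_plus derivation_scale derivation_D4 derivation_D6)

lemmas serre_simps = derivation_simps[OF derivation_serre]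
lemmas euler46_simps = derivation_simps[OF derivation_euler46]

lemma serre_generators:
  "serre E4 = (4 :: 'k::field poly3) * E6" "serre E6 = (6 :: 'k::field poly3) * E4^2"
  by (simp_all add: serre_def partials_generators)

lemma euler46_serre_commutator:
  "euler46 (serre f) = serre (euler46 f) + 2 * serre (f :: 'k::field poly3)"
  by (simp add: euler46_def serre_def D4_simps D6_simps partials_generators D4_D6_commute
      power2_eq_square algebra_simps)

lemma partials_Delta:
  "D2 Delta = (0 :: 'k::field poly3)" "D4 Delta = (3 * E4^2 :: 'k::field poly3)"
  "D6 Delta = (- 2 * E6 :: 'k::field poly3)"
  by (simp_all add: Delta_def D2_simps D4_simps D6_simps partials_generators power2_eq_square
      power3_eq_cube algebra_simps)

lemma eval3_Delta: "eval3 Delta x y z = y^3 - z^2"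
  by (simp add: Delta_def eval3_simps eval3_generators)

lemma eval3_ramanujan_at_1: "eval3 (ramanujan g) 1 1 1 = 0"
  by (simp add: ramanujan_def eval3_simps eval3_generators)

section \<open>The substitution \<open>e\<^sub>2 = u + t, e\<^sub>4 = t\<^sup>2, e\<^sub>6 = t\<^sup>3\<close>\<close>

definition const2 :: "'k::field \<Rightarrow> 'k poly poly" where
  "const2 c = [:[:c:]:]"

definition var_u :: "'k::field poly poly" where
  "var_u = [:[:0, 1:]:]"

definition var_t :: "'k::field poly poly" where
  "var_t = [:0, 1:]"

text \<open>Here \<open>k[u, t]\<close> is \<open>k[u][t]\<close>, and the substitution is performed one variable at a time.\<close>
definition subst_ut_e2 :: "'k::field poly \<Rightarrow> 'k poly poly" where
  "subst_ut_e2 r = poly (map_poly const2 r) (var_u + var_t)"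

definition subst_ut_e24 :: "'k::field poly poly \<Rightarrow> 'k poly poly" where
  "subst_ut_e24 q = poly (map_poly subst_ut_e2 q) (var_t ^ 2)"

definition subst_ut :: "'k::field poly3 \<Rightarrow> 'k poly poly" where
  "subst_ut f = poly (map_poly subst_ut_e24 f) (var_t ^ 3)"

lemma ring_homomorphism_const2: "ring_homomorphism const2"
  unfolding ring_homomorphism_def const2_def by (simp add: pCons_one)

lemma ring_homomorphism_subst_ut_e2: "ring_homomorphism subst_ut_e2"
  unfolding subst_ut_e2_def[abs_def]
  by (rule ring_homomorphism_comp[OF ring_homomorphism_poly
        ring_homomorphism_map_poly[OF ring_homomorphism_const2]])

lemma ring_homomorphism_subst_ut_e24: "ring_homomorphism subst_ut_e24"
  unfolding subst_ut_e24_def[abs_def]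
  by (rule ring_homomorphism_comp[OF ring_homomorphism_poly
        ring_homomorphism_map_poly[OF ring_homomorphism_subst_ut_e2]])

lemma ring_homomorphism_subst_ut: "ring_homomorphism subst_ut"
  unfolding subst_ut_def[abs_def]
  by (rule ring_homomorphism_comp[OF ring_homomorphism_poly
        ring_homomorphism_map_poly[OF ring_homomorphism_subst_ut_e24]])

lemmas subst_ut_simps = ring_homomorphism_simps[OF ring_homomorphism_subst_ut]

lemma subst_ut_generators:
  "subst_ut E2 = var_u + var_t" "subst_ut E4 = var_t ^ 2" "subst_ut E6 = var_t ^ 3"
  "subst_ut (C3 c) = const2 c"
  by (simp_all add: subst_ut_def subst_ut_e24_def subst_ut_e2_def E2_def E4_def E6_def C3_def
      map_poly_pCons ring_homomorphism_simps ring_homomorphism_const2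
      ring_homomorphism_subst_ut_e2 ring_homomorphism_subst_ut_e24)

lemma subst_ut_pCons:
  "subst_ut_e2 (pCons c r) = const2 c + (var_u + var_t) * subst_ut_e2 r"
  "subst_ut_e24 (pCons r q) = subst_ut_e2 r + var_t ^ 2 * subst_ut_e24 q"
  "subst_ut (pCons q f) = subst_ut_e24 q + var_t ^ 3 * subst_ut f"
  by (simp_all add: subst_ut_e2_def subst_ut_e24_def subst_ut_def map_poly_pCons
      ring_homomorphism_0 ring_homomorphism_const2 ring_homomorphism_subst_ut_e2
      ring_homomorphism_subst_ut_e24)

lemma subst_ut_chain_rule:
  assumes V: "derivation V" and V_const: "\<And>c. V (const2 c) = 0"
  shows "V (subst_ut f) = subst_ut (D2 f) * V (var_u + var_t) + subst_ut (D4 f) * V (var_t ^ 2)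
      + subst_ut (D6 f) * V (var_t ^ 3)"
proof -
  note V_simps = derivation_simps[OF V]
  have e2: "V (subst_ut_e2 r) = subst_ut_e2 (pderiv r) * V (var_u + var_t)" for r
  proof (induction r)
    case (pCons c r)
    have "subst_ut_e2 (pCons 0 (pderiv r)) = (var_u + var_t) * subst_ut_e2 (pderiv r)"
      by (simp add: subst_ut_pCons ring_homomorphism_simps[OF ring_homomorphism_const2])
    then show ?case
      by (simp add: subst_ut_pCons pderiv_pCons V_simps V_const pCons.IH
          ring_homomorphism_add[OF ring_homomorphism_subst_ut_e2] algebra_simps)
  qed (simp add: ring_homomorphism_0[OF ring_homomorphism_subst_ut_e2] V_simps)
  have e24: "V (subst_ut_e24 q) = subst_ut_e24 (map_poly pderiv q) * V (var_u + var_t)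
      + subst_ut_e24 (pderiv q) * V (var_t ^ 2)" for q
  proof (induction q)
    case (pCons r q)
    have "subst_ut_e24 (pCons 0 (pderiv q)) = var_t ^ 2 * subst_ut_e24 (pderiv q)"
      by (simp add: subst_ut_pCons ring_homomorphism_0[OF ring_homomorphism_subst_ut_e2])
    moreover have "map_poly pderiv (pCons r q) = pCons (pderiv r) (map_poly pderiv q)"
      by (simp add: map_poly_pCons)
    ultimately show ?case
      by (simp add: subst_ut_pCons pderiv_pCons V_simps e2 pCons.IH
          ring_homomorphism_add[OF ring_homomorphism_subst_ut_e24] algebra_simps)
  qed (simp add: ring_homomorphism_0[OF ring_homomorphism_subst_ut_e24] V_simps)
  show ?thesis
  proof (induction f)
    case (pCons q f)
    have "subst_ut (pCons 0 (D6 f)) = var_t ^ 3 * subst_ut (D6 f)"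
      by (simp add: subst_ut_pCons ring_homomorphism_0[OF ring_homomorphism_subst_ut_e24])
    moreover have "D2 (pCons q f) = pCons (map_poly pderiv q) (D2 f)"
      by (simp add: D2_def map_poly_pCons)
    moreover have "D4 (pCons q f) = pCons (pderiv q) (D4 f)"
      by (simp add: D4_def map_poly_pCons)
    moreover have "D6 (pCons q f) = f + pCons 0 (D6 f)"
      by (simp add: D6_def pderiv_pCons)
    ultimately show ?case
      by (simp add: subst_ut_pCons V_simps e24 pCons.IH subst_ut_simps algebra_simps)
  qed (simp add: subst_ut_simps V_simps D2_simps D4_simps D6_simps)
qed

text \<open>The vector field \<open>(u\<^sup>2 \<partial>\<^sub>u + 2 u t \<partial>\<^sub>t) / 12\<close> on \<open>k[u, t]\<close>, which corresponds to \<open>R\<close>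
  under \<open>subst_ut\<close>; \<open>map_poly pderiv\<close> is \<open>\<partial>\<^sub>u\<close> and \<open>pderiv\<close> is \<open>\<partial>\<^sub>t\<close>.\<close>
definition ramanujan_ut :: "'k::field poly poly \<Rightarrow> 'k poly poly" where
  "ramanujan_ut g
     = const2 (inverse 12) * (var_u^2 * map_poly pderiv g + 2 * var_u * var_t * pderiv g)"

lemma derivation_ramanujan_ut: "derivation ramanujan_ut"
proof -
  have "derivation (\<lambda>g. var_u^2 * map_poly pderiv g + 2 * var_u * var_t * pderiv g :: 'a poly poly)"
    by (intro derivation_plus derivation_scale derivation_map_poly derivation_pderiv)
  then show ?thesis
    unfolding ramanujan_ut_def[abs_def] by (rule derivation_scale)
qed

lemmas ramanujan_ut_simps = derivation_simps[OF derivation_ramanujan_ut]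

lemma ramanujan_ut_const2: "ramanujan_ut (const2 c) = 0"
  by (simp add: ramanujan_ut_def const2_def map_poly_pCons)

lemma ramanujan_ut_vars:
  "ramanujan_ut var_u = const2 (inverse 12) * var_u^2"
  "ramanujan_ut var_t = 2 * const2 (inverse 12) * var_u * var_t"
  by (simp_all add: ramanujan_ut_def var_u_def var_t_def map_poly_pCons pderiv_pCons pCons_one
      map_poly_1 algebra_simps)

lemma ramanujan_ut_monomial:
  "ramanujan_ut (var_u ^ i * var_t ^ j :: 'k::field poly poly)
     = const2 (inverse 12) * of_nat (i + 2 * j) * var_u ^ Suc i * var_t ^ j"
proof -
  have "ramanujan_ut (var_u ^ i :: 'k poly poly) = const2 (inverse 12) * of_nat i * var_u ^ Suc i"
    by (induction i)
      (simp_all add: ramanujan_ut_simps ramanujan_ut_vars algebra_simps power2_eq_square)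
  moreover have "ramanujan_ut (var_t ^ j :: 'k poly poly)
      = 2 * const2 (inverse 12) * of_nat j * var_u * var_t ^ j"
    by (induction j) (simp_all add: ramanujan_ut_simps ramanujan_ut_vars algebra_simps)
  ultimately show ?thesis
    by (simp add: ramanujan_ut_simps algebra_simps)
qed

lemma funpow_ramanujan_ut_monomial:
  "(ramanujan_ut ^^ n) (var_u ^ i * var_t ^ j :: 'k::field poly poly)
     = const2 (inverse 12) ^ n * of_nat (\<Prod>m<n. i + 2 * j + m) * var_u ^ (i + n) * var_t ^ j"
proof (induction n arbitrary: i)
  case (Suc n)
  let ?c = "const2 (inverse 12) * of_nat (i + 2 * j) :: 'k poly poly"
  have "ramanujan_ut ?c = 0"
    by (simp add: ramanujan_ut_simps ramanujan_ut_const2)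
  have "(ramanujan_ut ^^ Suc n) (var_u ^ i * var_t ^ j)
      = (ramanujan_ut ^^ n) (?c * (var_u ^ Suc i * var_t ^ j))"
    by (simp only: funpow_Suc_right o_apply) (simp add: ramanujan_ut_monomial mult.assoc)
  also have "\<dots> = ?c * (ramanujan_ut ^^ n) (var_u ^ Suc i * var_t ^ j)"
    by (rule funpow_derivation_const_mult[OF derivation_ramanujan_ut \<open>ramanujan_ut ?c = 0\<close>])
  finally show ?case
    by (simp only: Suc.IH) (simp add: prod.lessThan_Suc_shift algebra_simps del: prod.lessThan_Suc)
qed simp

lemma ramanujan_ut_generators:
  "ramanujan_ut (var_u + var_t) = const2 (inverse 12) * (var_u^2 + 2 * var_u * var_t)"
  "ramanujan_ut (var_t^2) = const2 (inverse 12) * (4 * var_u * var_t^2)"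
  "ramanujan_ut (var_t^3) = const2 (inverse 12) * (6 * var_u * var_t^3)"
  using ramanujan_ut_monomial[of 0 2] ramanujan_ut_monomial[of 0 3]
  by (simp_all add: ramanujan_ut_simps ramanujan_ut_vars algebra_simps)

definition eval_ut :: "'k::field \<Rightarrow> 'k \<Rightarrow> 'k poly poly \<Rightarrow> 'k" where
  "eval_ut u0 t0 g = poly (poly g [:t0:]) u0"

lemma ring_homomorphism_eval_ut: "ring_homomorphism (eval_ut u0 t0)"
  unfolding eval_ut_def[abs_def]
  by (rule ring_homomorphism_comp[OF ring_homomorphism_poly ring_homomorphism_poly])

lemma eval_ut_generators:
  "eval_ut u0 t0 (const2 c) = c" "eval_ut u0 t0 var_u = u0" "eval_ut u0 t0 var_t = t0"
  by (simp_all add: eval_ut_def const2_def var_u_def var_t_def)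

lemma eval_ut_subst_ut: "eval_ut u0 t0 (subst_ut f) = eval3 f (u0 + t0) (t0^2) (t0^3)"
proof -
  let ?e = "eval_ut u0 t0"
  note hom = ring_homomorphism_eval_ut[of u0 t0]
  note eval_simps = ring_homomorphism_simps[OF hom] eval_ut_generators
  have e2: "?e (subst_ut_e2 r) = poly r (u0 + t0)" for r
    unfolding subst_ut_e2_def
    by (simp add: ring_homomorphism_poly_commute[OF hom] map_poly_map_poly o_def eval_simps
        ring_homomorphism_0[OF ring_homomorphism_const2])
  have e24: "?e (subst_ut_e24 q) = poly (map_poly (\<lambda>r. poly r (u0 + t0)) q) (t0^2)" for q
    unfolding subst_ut_e24_def
    by (simp add: ring_homomorphism_poly_commute[OF hom] map_poly_map_poly o_def eval_simps e2
        ring_homomorphism_0[OF ring_homomorphism_subst_ut_e2])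
  show ?thesis
    unfolding subst_ut_def eval3_def
    by (simp add: ring_homomorphism_poly_commute[OF hom] map_poly_map_poly o_def eval_simps e24
        ring_homomorphism_0[OF ring_homomorphism_subst_ut_e24])
qed

section \<open>Characteristic \<open>p \<ge> 5\<close>\<close>

lemma dvd_prod_consecutive:
  assumes "0 < (p::nat)"
  shows "p dvd (\<Prod>m<p. N + m)"
proof -
  define r where "r = (p - N mod p) mod p"
  have "N + (p - N mod p) = (N div p + 1) * p"
    unfolding distrib_right mult_1_left
    using div_mult_mod_eq[of N p] mod_less_divisor[OF assms, of N] by linarith
  then have "p dvd N + r"
    unfolding r_def by (simp add: dvd_eq_mod_eq_0 mod_add_right_eq)
  moreover have "N + r dvd (\<Prod>m<p. N + m)"
    using assms by (intro dvd_prodI) (simp_all add: r_def)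
  ultimately show ?thesis
    by (rule dvd_trans)
qed

locale char_p_ge_5 =
  fixes p :: nat and ty :: "'k::field itself"
  assumes char_eq: "CHAR('k) = p" and prime_p: "prime p" and p_ge_5: "p \<ge> 5"
begin

lemma of_nat_eq_0_iff_dvd: "(of_nat n :: 'k) = 0 \<longleftrightarrow> p dvd n"
  using of_nat_eq_0_iff_char_dvd[where 'a = 'k] char_eq by simp

lemma of_nat_p_poly3: "(of_nat p :: 'k poly3) = 0"
  by (metis C3_simps(4,7) dvd_refl of_nat_eq_0_iff_dvd)

lemma of_nat_ne_0_if_dvd_24:
  assumes "n dvd 24"
  shows "(of_nat n :: 'k) \<noteq> 0"
proof
  assume "(of_nat n :: 'k) = 0"
  then have "p dvd fact 4"
    using assms by (simp add: of_nat_eq_0_iff_dvd fact_numeral dvd_trans)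
  then show False
    using prime_dvd_fact_iff[OF prime_p] p_ge_5 by simp
qed

lemma numerals_ne_0: "(2::'k) \<noteq> 0" "(3::'k) \<noteq> 0" "(4::'k) \<noteq> 0" "(12::'k) \<noteq> 0"
  using of_nat_ne_0_if_dvd_24[of 2] of_nat_ne_0_if_dvd_24[of 3] of_nat_ne_0_if_dvd_24[of 4]
    of_nat_ne_0_if_dvd_24[of 12] by simp_all

lemma C3_inverse_cancel:
  assumes "numeral n dvd (24::nat)"
  shows "C3 (inverse (numeral n)) * (numeral n * x) = (x :: 'k poly3)"
proof -
  have "inverse (numeral n) * numeral n = (1::'k)"
    using of_nat_ne_0_if_dvd_24[OF assms] by simp
  then have "C3 (inverse (numeral n)) * numeral n = (1 :: 'k poly3)"
    by (metis C3_simps(2,3,8))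
  then show ?thesis
    by (simp add: mult.assoc[symmetric])
qed

lemma mult_12_cancel:
  assumes "12 * x = 12 * y"
  shows "x = (y :: 'k poly3)"
proof -
  have "(12::nat) dvd 24" by simp
  from C3_inverse_cancel[OF this] show ?thesis
    using assms by metis
qed

lemma twelve_mult_C3_inverse:
  "12 * C3 (inverse 12) = (1 :: 'k poly3)" "12 * C3 (inverse 3) = (4 :: 'k poly3)"
  "12 * C3 (inverse 2) = (6 :: 'k poly3)"
proof -
  have "(12::'k) * inverse 12 = 1" "(12::'k) * inverse 3 = 4" "(12::'k) * inverse 2 = 6"
    using numerals_ne_0 by (simp_all add: field_simps)
  then show "12 * C3 (inverse 12) = (1 :: 'k poly3)" "12 * C3 (inverse 3) = (4 :: 'k poly3)"
    "12 * C3 (inverse 2) = (6 :: 'k poly3)"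
    by (metis C3_simps(2,3,8))+
qed

lemma ramanujan_times_12:
  "12 * ramanujan f = (E2^2 - E4) * D2 f + 4 * (E2 * E4 - E6) * D4 f
     + 6 * (E2 * E6 - E4^2) * D6 (f :: 'k poly3)"
  unfolding ramanujan_def using twelve_mult_C3_inverse by algebra

lemma D2_ramanujan_commutator:
  "12 * D2 (ramanujan f) = 12 * ramanujan (D2 f) + euler (f :: 'k poly3)"
proof -
  have "12 * D2 (ramanujan f) = D2 (12 * ramanujan f)"
    by (simp add: D2_simps)
  also have "\<dots> = 12 * ramanujan (D2 f) + euler f"
    unfolding ramanujan_times_12 euler_def
    by (simp add: D2_simps partials_generators power2_eq_square D2_D4_commute D2_D6_commute
        algebra_simps)
  finally show ?thesis .
qed

lemma euler_ramanujan_commutator: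
  "euler (ramanujan f) = ramanujan (euler f) + 2 * ramanujan (f :: 'k poly3)"
proof (rule mult_12_cancel)
  have "12 * euler (ramanujan f) = euler (12 * ramanujan f)"
    by (simp add: derivation_simps[OF derivation_euler])
  also have "\<dots> = 12 * ramanujan (euler f) + 2 * (12 * ramanujan f)"
    unfolding ramanujan_times_12 euler_def
    by (simp add: D2_simps D4_simps D6_simps partials_generators power2_eq_square
        D2_D4_commute D2_D6_commute D4_D6_commute algebra_simps)
  finally show "12 * euler (ramanujan f) = 12 * (ramanujan (euler f) + 2 * ramanujan f)"
    by (simp add: algebra_simps)
qed

lemma euler_funpow_ramanujan:
  "euler ((ramanujan ^^ n) f)
     = (ramanujan ^^ n) (euler f) + 2 * of_nat n * (ramanujan ^^ n) (f :: 'k poly3)"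
proof (induction n)
  case (Suc n)
  have "euler ((ramanujan ^^ Suc n) f)
      = ramanujan (euler ((ramanujan ^^ n) f)) + 2 * ramanujan ((ramanujan ^^ n) f)"
    by (simp add: euler_ramanujan_commutator)
  also have "\<dots> = (ramanujan ^^ Suc n) (euler f) + 2 * of_nat (Suc n) * (ramanujan ^^ Suc n) f"
    unfolding Suc by (simp add: ramanujan_simps algebra_simps)
  finally show ?case .
qed simp

lemma D2_funpow_ramanujan:
  "12 * D2 ((ramanujan ^^ Suc n) f) = 12 * (ramanujan ^^ Suc n) (D2 f)
     + of_nat (Suc n) * (ramanujan ^^ n) (euler f)
     + of_nat (Suc n) * of_nat n * (ramanujan ^^ n) (f :: 'k poly3)"
proof (induction n arbitrary: f)
  case 0
  then show ?case by (simp add: D2_ramanujan_commutator)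
next
  case (Suc n)
  let ?R = ramanujan
  note R_add = funpow_derivation_add[OF derivation_ramanujan]
    and R_const = funpow_derivation_const_mult[OF derivation_ramanujan]
  have swap: "(?R ^^ m) (?R g) = (?R ^^ Suc m) g" for m g
    by (simp only: funpow_Suc_right o_apply)
  have "12 * D2 ((?R ^^ Suc (Suc n)) f) = 12 * (?R ^^ Suc n) (D2 (?R f))
      + of_nat (Suc n) * (?R ^^ n) (euler (?R f)) + of_nat (Suc n) * of_nat n * (?R ^^ n) (?R f)"
    using Suc.IH[of "?R f"] by (simp only: swap)
  also have "12 * (?R ^^ Suc n) (D2 (?R f)) = (?R ^^ Suc n) (12 * D2 (?R f))"
    by (simp add: R_const ramanujan_simps)
  also have "\<dots> = 12 * (?R ^^ Suc (Suc n)) (D2 f) + (?R ^^ Suc n) (euler f)"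
    by (simp add: D2_ramanujan_commutator R_add R_const ramanujan_simps swap)
  also have "(?R ^^ n) (euler (?R f)) = (?R ^^ Suc n) (euler f) + 2 * (?R ^^ Suc n) f"
    by (simp add: euler_ramanujan_commutator R_add R_const ramanujan_simps swap)
  finally show ?case
    by (simp add: swap algebra_simps)
qed

lemma D2_ramanujan_p: "D2 ((ramanujan ^^ p) f) = (ramanujan ^^ p) (D2 (f :: 'k poly3))"
proof (rule mult_12_cancel)
  obtain m where p: "p = Suc m"
    using p_ge_5 by (cases p) auto
  then have "(of_nat (Suc m) :: 'k poly3) = 0"
    using of_nat_p_poly3 by simp
  then show "12 * D2 ((ramanujan ^^ p) f) = 12 * (ramanujan ^^ p) (D2 f)"
    using D2_funpow_ramanujan[of m f] unfolding p by simp
qed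

lemma euler_ramanujan_p: "euler ((ramanujan ^^ p) f) = (ramanujan ^^ p) (euler (f :: 'k poly3))"
  by (simp add: euler_funpow_ramanujan of_nat_p_poly3)

lemma derivation_ramanujan_p: "derivation (ramanujan ^^ p :: 'k poly3 \<Rightarrow> 'k poly3)"
  using derivation_funpow_prime[OF derivation_ramanujan prime_p of_nat_p_poly3] .

lemmas ramanujan_p_simps = derivation_simps[OF derivation_ramanujan_p]

abbreviation Rp2 :: "'k poly3" where "Rp2 \<equiv> (ramanujan ^^ p) E2"
abbreviation Rp4 :: "'k poly3" where "Rp4 \<equiv> (ramanujan ^^ p) E4"
abbreviation Rp6 :: "'k poly3" where "Rp6 \<equiv> (ramanujan ^^ p) E6"

lemma D2_Rp: "D2 Rp2 = 0" "D2 Rp4 = 0" "D2 Rp6 = 0"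
  by (simp_all add: D2_ramanujan_p partials_generators ramanujan_p_simps)

lemma euler_Rp: "euler Rp2 = 2 * Rp2" "euler Rp4 = 4 * Rp4" "euler Rp6 = 6 * Rp6"
  by (simp_all add: euler_ramanujan_p euler_generators ramanujan_p_simps)

lemma pochhammer_1_ne_0: "j < p \<Longrightarrow> pochhammer (1::'k) j \<noteq> 0"
  using prime_dvd_fact_iff[OF prime_p] of_nat_eq_0_iff_dvd[of "fact j"]
  by (metis linorder_not_le of_nat_1 pochhammer_fact pochhammer_of_nat)

text \<open>Taylor expansion at \<open>y\<close>: below degree \<open>p\<close> no factorial vanishes.\<close>
lemma poly_eq_0_if_higher_pderivs_vanish:
  fixes f :: "'k poly"
  assumes "degree f < p" and "\<And>j. poly ((pderiv ^^ j) f) y = 0"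
  shows "f = 0"
proof -
  define g where "g = pcompose f [:y, 1:]"
  have "coeff g j = 0" for j
  proof (cases "j < p")
    case True
    have "(pderiv ^^ j) g = pcompose ((pderiv ^^ j) f) [:y, 1:]"
      unfolding g_def by (induction j) (simp_all add: pderiv_pcompose pderiv_pCons)
    then have "coeff ((pderiv ^^ j) g) 0 = 0"
      using assms(2) by (simp add: poly_0_coeff_0[symmetric] poly_pcompose)
    then show ?thesis
      using pochhammer_1_ne_0[OF True] by (simp add: coeff_higher_pderiv)
  next
    case False
    then show ?thesis
      using assms(1) by (simp add: g_def degree_pcompose coeff_eq_0)
  qed
  then have "g = 0"
    by (simp add: poly_eq_iff)
  then show ?thesis
    unfolding g_def by (rule pcompose_eq_0) simp
qed

lemma poly2_eq_0_if_higher_pderivs_vanish: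
  fixes A :: "'k poly poly"
  assumes "degree A < p" and "\<And>k. degree (coeff A k) < p"
    and "\<And>i j. poly ((pderiv ^^ j) (subst_e4 y ((map_poly pderiv ^^ i) A))) z = 0"
  shows "A = 0"
proof -
  have "subst_e4 y ((map_poly pderiv ^^ i) A) = 0" for i
  proof (rule poly_eq_0_if_higher_pderivs_vanish[OF _ assms(3)])
    have "degree ((map_poly pderiv ^^ i) A) \<le> degree A"
      by (induction i) (auto intro: order.trans[OF map_poly_degree_leq])
    then show "degree (subst_e4 y ((map_poly pderiv ^^ i) A)) < p"
      unfolding subst_e4_def using assms(1) by (meson le_less_trans map_poly_degree_leq)
  qed
  moreover have "coeff ((map_poly pderiv ^^ i) A) k = (pderiv ^^ i) (coeff A k)" for i k
    by (induction i) (simp_all add: coeff_map_poly)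
  ultimately have "coeff A k = 0" for k
    using poly_eq_0_if_higher_pderivs_vanish[OF assms(2)]
    by (metis (no_types, lifting) coeff_0 coeff_map_poly poly_0 subst_e4_def)
  then show ?thesis
    by (simp add: poly_eq_iff)
qed

lemma twelve_ramanujan_generators:
  "12 * ramanujan E2 = (E2^2 - E4 :: 'k poly3)"
  "12 * ramanujan E4 = (4 * (E2 * E4 - E6) :: 'k poly3)"
  "12 * ramanujan E6 = (6 * (E2 * E6 - E4^2) :: 'k poly3)"
  by (simp_all add: ramanujan_times_12 partials_generators)

lemma twelve_ramanujan_eq_on_D2_kernel:
  "D2 f = 0 \<Longrightarrow> 12 * ramanujan f = E2 * euler f - serre (f :: 'k poly3)"
  using ramanujan_times_12[of f] by (simp add: euler_def serre_def algebra_simps)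

lemma twelve_ramanujan_Rp:
  "12 * ramanujan ((ramanujan ^^ p) g) = (ramanujan ^^ p) (12 * ramanujan (g :: 'k poly3))"
  by (simp add: funpow_derivation_const_mult[OF derivation_ramanujan] ramanujan_simps funpow_swap1)

lemma serre_Rp2: "serre Rp2 = Rp4"
proof -
  have "12 * ramanujan Rp2 = 2 * E2 * Rp2 - Rp4"
    unfolding twelve_ramanujan_Rp twelve_ramanujan_generators
    by (simp add: ramanujan_p_simps power2_eq_square)
  moreover have "12 * ramanujan Rp2 = E2 * (2 * Rp2) - serre Rp2"
    using twelve_ramanujan_eq_on_D2_kernel[OF D2_Rp(1)] euler_Rp by simp
  ultimately show ?thesis
    by algebra
qed

lemma serre_Rp4: "serre Rp4 = 4 * Rp6 - 4 * Rp2 * E4"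
proof -
  have "12 * ramanujan Rp4 = 4 * (Rp2 * E4 + E2 * Rp4 - Rp6)"
    unfolding twelve_ramanujan_Rp twelve_ramanujan_generators by (simp add: ramanujan_p_simps)
  moreover have "12 * ramanujan Rp4 = E2 * (4 * Rp4) - serre Rp4"
    using twelve_ramanujan_eq_on_D2_kernel[OF D2_Rp(2)] euler_Rp by simp
  ultimately show ?thesis
    by algebra
qed

lemma serre_Rp6: "serre Rp6 = 12 * E4 * Rp4 - 6 * E6 * Rp2"
proof -
  have "12 * ramanujan Rp6 = 6 * (Rp2 * E6 + E2 * Rp6 - 2 * E4 * Rp4)"
    unfolding twelve_ramanujan_Rp twelve_ramanujan_generators by (simp add: ramanujan_p_simps
        power2_eq_square algebra_simps)
  moreover have "12 * ramanujan Rp6 = E2 * (6 * Rp6) - serre Rp6"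
    using twelve_ramanujan_eq_on_D2_kernel[OF D2_Rp(3)] euler_Rp by simp
  ultimately show ?thesis
    by algebra
qed

lemma serre_serre_Rp4: "serre (serre Rp4) = 44 * E4 * Rp4 - 40 * E6 * Rp2"
  by (simp add: serre_Rp4 serre_Rp6 serre_Rp2 serre_simps serre_generators algebra_simps)

lemma euler46_Rp: "euler46 Rp2 = 2 * Rp2" "euler46 Rp4 = 4 * Rp4" "euler46 Rp6 = 6 * Rp6"
  using euler_Rp D2_Rp by (simp_all add: euler_def euler46_def)

definition Rp_span :: "'k poly3 \<Rightarrow> bool" where
  "Rp_span f \<longleftrightarrow> (\<exists>u v w. f = u * Rp2 + v * Rp4 + w * serre Rp4)"

lemma Rp_span_add:
  assumes "Rp_span f" and "Rp_span g"
  shows "Rp_span (f + g)"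
proof -
  obtain u v w u' v' w' where
    "f = u * Rp2 + v * Rp4 + w * serre Rp4" and "g = u' * Rp2 + v' * Rp4 + w' * serre Rp4"
    using assms unfolding Rp_span_def by blast
  then have "f + g = (u + u') * Rp2 + (v + v') * Rp4 + (w + w') * serre Rp4"
    by (simp add: algebra_simps)
  then show ?thesis
    unfolding Rp_span_def by blast
qed

lemma Rp_span_mult:
  assumes "Rp_span f"
  shows "Rp_span (g * f)"
proof -
  obtain u v w where "f = u * Rp2 + v * Rp4 + w * serre Rp4"
    using assms unfolding Rp_span_def by blast
  then have "g * f = (g * u) * Rp2 + (g * v) * Rp4 + (g * w) * serre Rp4"
    by (simp add: algebra_simps)
  then show ?thesis
    unfolding Rp_span_def by blast
qed

lemma Rp_span_diff: "Rp_span f \<Longrightarrow> Rp_span g \<Longrightarrow> Rp_span (f - g)"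
  using Rp_span_add[of f "- g"] Rp_span_mult[of g "- 1"] by simp

lemma Rp_span_Rp2: "Rp_span Rp2"
  unfolding Rp_span_def by (rule exI[of _ 1], rule exI[of _ 0], rule exI[of _ 0]) simp

lemma Rp_span_serre: "Rp_span f \<Longrightarrow> Rp_span (serre f)"
proof -
  assume "Rp_span f"
  then obtain u v w where f: "f = u * Rp2 + v * Rp4 + w * serre Rp4"
    unfolding Rp_span_def by blast
  have "serre f = (serre u - 40 * E6 * w) * Rp2 + (u + serre v + 44 * E4 * w) * Rp4
      + (v + serre w) * serre Rp4"
    unfolding f by (simp add: serre_simps serre_Rp2 serre_serre_Rp4 algebra_simps)
  then show ?thesis
    unfolding Rp_span_def by blast
qed

lemma Rp_span_euler46: "Rp_span f \<Longrightarrow> Rp_span (euler46 f)"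
proof -
  assume "Rp_span f"
  then obtain u v w where f: "f = u * Rp2 + v * Rp4 + w * serre Rp4"
    unfolding Rp_span_def by blast
  have "euler46 (serre Rp4) = 6 * serre Rp4"
    by (simp add: euler46_serre_commutator euler46_Rp serre_simps)
  then have "euler46 f = (euler46 u + 2 * u) * Rp2 + (euler46 v + 4 * v) * Rp4
      + (euler46 w + 6 * w) * serre Rp4"
    unfolding f by (simp add: euler46_simps euler46_Rp algebra_simps)
  then show ?thesis
    unfolding Rp_span_def by blast
qed

lemma Rp_span_Delta_D4: "Rp_span f \<Longrightarrow> Rp_span (Delta * D4 f)"
proof -
  have "(4::nat) dvd 24" by simp
  moreover have "4 * (Delta * D4 f) = E4^2 * euler46 f - E6 * serre f"
    by (simp add: Delta_def euler46_def serre_def algebra_simps power2_eq_square power3_eq_cube)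
  ultimately have "Delta * D4 f = C3 (inverse 4) * (E4^2 * euler46 f - E6 * serre f)"
    by (metis C3_inverse_cancel)
  then show "Rp_span f \<Longrightarrow> Rp_span (Delta * D4 f)"
    by (simp add: Rp_span_mult Rp_span_diff Rp_span_euler46 Rp_span_serre)
qed

lemma Rp_span_Delta_D6: "Rp_span f \<Longrightarrow> Rp_span (Delta * D6 f)"
proof -
  have "(6::nat) dvd 24" by simp
  moreover have "6 * (Delta * D6 f) = E4 * serre f - E6 * euler46 f"
    by (simp add: Delta_def euler46_def serre_def algebra_simps power2_eq_square power3_eq_cube)
  ultimately have "Delta * D6 f = C3 (inverse 6) * (E4 * serre f - E6 * euler46 f)"
    by (metis C3_inverse_cancel)
  then show "Rp_span f \<Longrightarrow> Rp_span (Delta * D6 f)"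
    by (simp add: Rp_span_mult Rp_span_diff Rp_span_euler46 Rp_span_serre)
qed

lemma Rp_span_Delta_power_funpow:
  assumes D: "derivation D" and span_D: "\<And>f. Rp_span f \<Longrightarrow> Rp_span (Delta * D f)"
    and "Rp_span f"
  shows "Rp_span (Delta ^ i * (D ^^ i) f)"
proof (induction i)
  case 0
  then show ?case using \<open>Rp_span f\<close> by simp
next
  case (Suc i)
  let ?g = "Delta ^ i * (D ^^ i) f"
  have "Delta * D (Delta ^ i) = of_nat i * Delta ^ i * D Delta"
  proof (cases i)
    case (Suc m)
    then show ?thesis
      using derivation_power[OF D, of Delta m] by (simp add: algebra_simps)
  qed (simp add: derivation_1[OF D])
  then have "Delta ^ Suc i * (D ^^ Suc i) f = Delta * D ?g - (of_nat i * D Delta) * ?g"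
    by (simp add: derivation_mult[OF D] algebra_simps)
  then show ?case
    using span_D[OF Suc] Rp_span_mult[OF Suc] by (simp add: Rp_span_diff)
qed

lemma homogeneous_Rp2: "homogeneous (2 + 2 * int p) Rp2"
  using homogeneous_funpow_ramanujan[OF homogeneous_generators(1), of p] by simp

text \<open>Since \<open>D2 Rp2 = 0\<close>, a monomial \<open>e\<^sub>2\<^sup>i\<close> with \<open>i > 0\<close> in \<open>Rp2\<close> needs \<open>p\<close> to divide \<open>i\<close>;
  the weight \<open>2p + 2\<close> then leaves only \<open>i = p\<close>, which would require \<open>6k + 4j = 2\<close>.\<close>
lemma coeff_Rp2_e2:
  assumes "i > 0"
  shows "coeff (coeff (coeff Rp2 k) j) i = 0"
proof (rule ccontr)
  assume c: "coeff (coeff (coeff Rp2 k) j) i \<noteq> 0"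
  have w: "2 + 2 * int p = 6 * int k + 4 * int j + 2 * int i"
    using homogeneous_coeff[OF homogeneous_Rp2 c] .
  obtain i' where i': "i = Suc i'"
    using assms by (cases i) auto
  have "of_nat i * coeff (coeff (coeff Rp2 k) j) i = 0"
    using coeff_D2[of Rp2 k j i'] D2_Rp(1) i' by simp
  then have "p dvd i"
    using c of_nat_eq_0_iff_dvd by simp
  then obtain m where m: "i = p * m"
    by (elim dvdE)
  have "i < p * 2"
    using w p_ge_5 by linarith
  then have "m < 2"
    using m p_ge_5 by simp
  moreover have "m \<noteq> 0"
    using m assms by auto
  ultimately have "i = p"
    using m by (simp add: less_2_cases_iff)
  then have "6 * int k + 4 * int j = 2"
    using w by linarith
  then show False
    by presburger
qed

lemma degree_Rp2: "degree Rp2 < p" "degree (coeff Rp2 k) < p"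
proof -
  show "degree Rp2 < p"
  proof (cases "Rp2 = 0")
    case False
    then show ?thesis
      using homogeneous_degree_le(1)[OF homogeneous_Rp2 False] p_ge_5 by linarith
  qed (use p_ge_5 in simp)
  show "degree (coeff Rp2 k) < p"
  proof (cases "coeff Rp2 k = 0")
    case False
    then show ?thesis
      using homogeneous_degree_le(2)[OF homogeneous_Rp2 False] p_ge_5 by linarith
  qed (use p_ge_5 in simp)
qed

lemma Rp2_eq_0_if_subst_e2_eq_0:
  assumes "subst_e2 x Rp2 = 0"
  shows "Rp2 = 0"
proof -
  have "coeff (coeff (coeff Rp2 k) j) 0 = 0" for k j
  proof -
    have "coeff (coeff Rp2 k) j = [:coeff (coeff (coeff Rp2 k) j) 0:]"
      by (rule poly_eqI) (auto simp: coeff_pCons coeff_Rp2_e2 split: nat.splits)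
    moreover have "poly (coeff (coeff Rp2 k) j) x = 0"
      using arg_cong[OF assms, of "\<lambda>g. coeff (coeff g k) j"]
      by (simp add: subst_e2_def coeff_map_poly)
    ultimately show ?thesis
      by (metis poly_pCons poly_0 mult_zero_right add_0_right)
  qed
  then show ?thesis
    using coeff_Rp2_e2 by (metis neq0_conv poly_eqI coeff_0)
qed

lemma Rp_span_eval3_eq_0:
  assumes "eval3 Rp2 x y z = 0" "eval3 Rp4 x y z = 0" "eval3 Rp6 x y z = 0" and "Rp_span f"
  shows "eval3 f x y z = 0"
proof -
  obtain u v w where f: "f = u * Rp2 + v * Rp4 + w * serre Rp4"
    using assms(4) unfolding Rp_span_def by blast
  have "eval3 (serre Rp4) x y z = 0"
    using assms(1,3) by (simp add: serre_Rp4 eval3_simps)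
  then show ?thesis
    using assms(1,2) by (simp add: f eval3_simps)
qed

text \<open>The multipliers \<open>Delta\<^sup>i\<close> and \<open>Delta\<^sup>j\<close> do not vanish at the point and can be cancelled.\<close>
lemma eval3_higher_partials_Rp2:
  assumes "eval3 Rp2 x y z = 0" "eval3 Rp4 x y z = 0" "eval3 Rp6 x y z = 0"
    and "eval3 Delta x y z \<noteq> 0"
  shows "eval3 ((D6 ^^ j) ((D4 ^^ i) Rp2)) x y z = 0"
proof (rule hom_funpow_derivation_cancel_factor[OF derivation_D6 ring_homomorphism_eval3])
  show "eval3 (Delta ^ i) x y z \<noteq> 0" for i
    using assms(4) by (simp add: eval3_simps)
  have "Rp_span (Delta ^ i * (D4 ^^ i) Rp2)"
    by (rule Rp_span_Delta_power_funpow[OF derivation_D4 Rp_span_Delta_D4 Rp_span_Rp2])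
  from Rp_span_Delta_power_funpow[OF derivation_D6 Rp_span_Delta_D6 this]
  have "Rp_span (Delta ^ j * (D6 ^^ j) (Delta ^ i * (D4 ^^ i) Rp2))" for j .
  from Rp_span_eval3_eq_0[OF assms(1-3) this]
  show "eval3 ((D6 ^^ j) (Delta ^ i * (D4 ^^ i) Rp2)) x y z = 0" for j
    using assms(4) by (simp add: eval3_simps)
qed

lemma Rp2_eq_0_if_common_zero:
  assumes "eval3 Rp2 x y z = 0" "eval3 Rp4 x y z = 0" "eval3 Rp6 x y z = 0"
    and "eval3 Delta x y z \<noteq> 0"
  shows "Rp2 = 0"
proof (rule Rp2_eq_0_if_subst_e2_eq_0)
  show "subst_e2 x Rp2 = 0"
  proof (rule poly2_eq_0_if_higher_pderivs_vanish)
    show "degree (subst_e2 x Rp2) < p"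
      using degree_Rp2(1) unfolding subst_e2_def by (meson le_less_trans map_poly_degree_leq)
    show "degree (coeff (subst_e2 x Rp2) k) < p" for k
      using degree_Rp2(2)[of k] unfolding subst_e2_def
      by (simp add: coeff_map_poly) (meson le_less_trans map_poly_degree_leq)
    show "poly ((pderiv ^^ j) (subst_e4 y ((map_poly pderiv ^^ i) (subst_e2 x Rp2)))) z = 0" for i j
      using eval3_higher_partials_Rp2[OF assms, of j i] by (simp add: eval3_higher_partials)
  qed
qed

lemma ramanujan_Delta: "ramanujan Delta = E2 * (Delta :: 'k poly3)"
proof (rule mult_12_cancel)
  show "12 * ramanujan Delta = 12 * (E2 * (Delta :: 'k poly3))"
    unfolding ramanujan_times_12 partials_Delta
    by (simp add: Delta_def algebra_simps power2_eq_square power3_eq_cube)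
qed

lemma funpow_ramanujan_Delta:
  "\<exists>P. (ramanujan ^^ n) Delta = P * (Delta :: 'k poly3) \<and> eval3 P 1 1 1 = 1"
proof (induction n)
  case (Suc n)
  then obtain P where P: "(ramanujan ^^ n) Delta = P * (Delta :: 'k poly3)" "eval3 P 1 1 1 = 1"
    by blast
  have "(ramanujan ^^ Suc n) Delta = (ramanujan P + P * E2) * Delta"
    by (simp add: P ramanujan_simps ramanujan_Delta algebra_simps)
  moreover have "eval3 (ramanujan P + P * E2) 1 1 1 = 1"
    by (simp add: eval3_simps eval3_ramanujan_at_1 eval3_generators P(2))
  ultimately show ?case
    by blast
qed (rule exI[of _ 1], simp add: eval3_simps)

text \<open>\<open>Rp2 = 0\<close> would force \<open>R\<^sup>p Delta = 0\<close>; but \<open>R\<^sup>p Delta = P Delta\<close> with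
  \<open>P(1, 1, 1) = 1\<close>, because \<open>R\<close> vanishes at \<open>(1, 1, 1)\<close> and \<open>R Delta = e\<^sub>2 Delta\<close>,
  so \<open>D4 (P Delta)\<close> is \<open>3\<close> at \<open>(1, 1, 1)\<close>.\<close>
lemma Rp2_ne_0: "Rp2 \<noteq> 0"
proof
  assume Rp2: "Rp2 = 0"
  then have Rp4: "Rp4 = 0"
    using serre_Rp2 by (simp add: Rp2 serre_simps)
  have "(4::nat) dvd 24" by simp
  moreover have "4 * Rp6 = 0"
    using serre_Rp4 by (simp add: Rp2 Rp4 serre_simps)
  ultimately have Rp6: "Rp6 = 0"
    by (metis C3_inverse_cancel mult_zero_right)
  obtain P where P: "(ramanujan ^^ p) Delta = P * (Delta :: 'k poly3)" "eval3 P 1 1 1 = 1"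
    using funpow_ramanujan_Delta by blast
  have "(ramanujan ^^ p) Delta = (0 :: 'k poly3)"
    by (simp add: Delta_def ramanujan_p_simps Rp4 Rp6 power2_eq_square power3_eq_cube)
  then have "D4 (P * Delta) = 0"
    using P(1) derivation_0[OF derivation_D4] by metis
  then have "eval3 (D4 (P * Delta)) 1 1 1 = 0"
    by (simp add: eval3_simps)
  moreover have "eval3 (D4 (P * Delta)) 1 1 1 = 3"
    by (simp add: D4_simps partials_Delta eval3_simps eval3_Delta eval3_generators P(2))
  ultimately show False
    using numerals_ne_0(2) by simp
qed

lemma common_zero_Rp_imp_cusp:
  assumes "eval3 Rp2 x y z = 0" "eval3 Rp4 x y z = 0" "eval3 Rp6 x y z = 0"
  shows "y^3 - z^2 = 0"
  using Rp2_eq_0_if_common_zero[OF assms] Rp2_ne_0 eval3_Delta by metis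

lemma const2_inverse_12_cancel: "const2 (inverse 12) * (12 * g) = (g :: 'k poly poly)"
proof -
  have "inverse 12 * 12 = (1::'k)"
    using numerals_ne_0(4) by simp
  then have "const2 (inverse 12) * 12 = (1 :: 'k poly poly)"
    by (metis ring_homomorphism_simps(2,3,8)[OF ring_homomorphism_const2])
  then show ?thesis
    by (simp add: mult.assoc[symmetric])
qed

lemma subst_ut_ramanujan: "subst_ut (ramanujan f) = ramanujan_ut (subst_ut (f :: 'k poly3))"
proof -
  let ?X = "(var_u^2 + 2 * var_u * var_t) * subst_ut (D2 f) + 4 * var_u * var_t^2 * subst_ut (D4 f)
    + 6 * var_u * var_t^3 * subst_ut (D6 f)"
  have "12 * subst_ut (ramanujan f) = subst_ut (12 * ramanujan f)"
    by (simp add: subst_ut_simps)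
  also have "\<dots> = ?X"
    unfolding ramanujan_times_12
    by (simp add: subst_ut_simps subst_ut_generators power2_eq_square power3_eq_cube algebra_simps)
  finally have "subst_ut (ramanujan f) = const2 (inverse 12) * ?X"
    by (metis const2_inverse_12_cancel)
  also have "\<dots> = ramanujan_ut (subst_ut f)"
    unfolding subst_ut_chain_rule[OF derivation_ramanujan_ut ramanujan_ut_const2]
      ramanujan_ut_generators
    by (simp add: algebra_simps)
  finally show ?thesis .
qed

lemma funpow_ramanujan_ut_p_generators:
  "(ramanujan_ut ^^ p) (var_u + var_t :: 'k poly poly) = 0"
  "(ramanujan_ut ^^ p) (var_t ^ 2 :: 'k poly poly) = 0"
  "(ramanujan_ut ^^ p) (var_t ^ 3 :: 'k poly poly) = 0"
proof -
  have "(ramanujan_ut ^^ p) (var_u ^ i * var_t ^ j :: 'k poly poly) = 0" for i j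
  proof -
    have "(of_nat (\<Prod>m<p. i + 2 * j + m) :: 'k) = 0"
      using dvd_prod_consecutive[OF prime_gt_0_nat[OF prime_p]] of_nat_eq_0_iff_dvd by blast
    then show ?thesis
      by (simp add: funpow_ramanujan_ut_monomial of_nat_poly)
  qed
  from this[of 1 0] this[of 0 1] this[of 0 2] this[of 0 3]
  show "(ramanujan_ut ^^ p) (var_u + var_t :: 'k poly poly) = 0"
    "(ramanujan_ut ^^ p) (var_t ^ 2 :: 'k poly poly) = 0"
    "(ramanujan_ut ^^ p) (var_t ^ 3 :: 'k poly poly) = 0"
    by (simp_all add: funpow_derivation_add[OF derivation_ramanujan_ut])
qed

text \<open>A point of the cusp \<open>y\<^sup>3 = z\<^sup>2\<close> is \<open>(u + t, t\<^sup>2, t\<^sup>3)\<close> with \<open>t = z / y\<close> (or \<open>t = 0\<close>).\<close>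
lemma cusp_imp_common_zero_Rp:
  assumes "y^3 - z^2 = (0::'k)"
  shows "eval3 Rp2 x y z = 0 \<and> eval3 Rp4 x y z = 0 \<and> eval3 Rp6 x y z = 0"
proof -
  define t where "t = (if y = 0 then 0 else z / y)"
  have t2: "t^2 = y"
  proof (cases "y = 0")
    case False
    then have "z^2 / y^2 = y"
      using assms by (simp add: power2_eq_square power3_eq_cube field_simps)
    then show ?thesis
      using False by (simp add: t_def power_divide)
  qed (simp add: t_def)
  have t3: "t^3 = z"
  proof (cases "y = 0")
    case True
    then show ?thesis using assms by (simp add: t_def)
  next
    case False
    then show ?thesis
      using t2 by (simp add: t_def power3_eq_cube power2_eq_square)
  qed
  have "eval3 ((ramanujan ^^ p) g) x y z = eval_ut (x - t) t ((ramanujan_ut ^^ p) (subst_ut g))"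
    for g
    using eval_ut_subst_ut[of "x - t" t "(ramanujan ^^ p) g"] t2 t3
    by (simp add: funpow_commute_map[where h = subst_ut and f = ramanujan and g = ramanujan_ut,
          OF subst_ut_ramanujan])
  then show ?thesis
    by (simp add: subst_ut_generators funpow_ramanujan_ut_p_generators
        ring_homomorphism_0[OF ring_homomorphism_eval_ut])
qed

end

theorem corollary2p6:
  fixes p :: nat
  assumes "alg_closed_field TYPE('k::field)"
    and "CHAR('k) = p" and "prime p" and "p \<ge> 5"
  shows "{(a :: 'k, b, c).
            eval3 ((ramanujan ^^ p) E2) a b c = 0 \<and>
            eval3 ((ramanujan ^^ p) E4) a b c = 0 \<and>
            eval3 ((ramanujan ^^ p) E6) a b c = 0}
       = {(a, b, c). b ^ 3 - c ^ 2 = 0}"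
proof -
  interpret char_p_ge_5 p "TYPE('k)"
    using assms(2-4) by unfold_locales
  show ?thesis
    using common_zero_Rp_imp_cusp cusp_imp_common_zero_Rp by blast
qed

end
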